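(* Let $M$ be an $n\times n$ primitive Boolean matrix with Boolean rank $b(M)=2$. Then $k(M)=2$ if and only if $M$ has a Boolean rank factorization $M=AB$ (with $A$ an $n\times 2$ and $B$ a $2\times n$ Boolean matrix) such that: (i) $BA=W_2$ or $BA=J_2$, where $W_2=\left[\begin{array}{cc}1&1\\1&0\end{array}\right]$ and $J_2=\left[\begin{array}{cc}1&1\\1&1\end{array}\right]$; (ii) some row of $A$ equals $e_1^t(2)$ and some row of $A$ equals $e_2^t(2)$; (iii) no column of $B$ equals $e_1(2)+e_2(2)$.
   Context: Boolean matrices are $(0,1)$-matrices with Boolean arithmetic ($1+1=1$). A square Boolean matrix is primitive if some power has all entries $1$; its scrambling index $k(M)$ is the smallest positive integer $k$ such that any two rows of $M^k$ have a $1$ in a common position (equivalently $M^k(M^t)^k=J$). The Boolean rank $b(M)$ is the smallest $b$ with $M=AB$, $A$ of size $n\times b$ and $B$ of size $b\times n$ Boolean; such a factorization is a Boolean rank factorization. $e_i(2)$ denotes the $i$th column of the $2\times 2$ identity matrix. *)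

theory Defs
  imports Main
begin

text \<open>Boolean matrices are represented as functions nat => nat => bool;
  dimensions are carried explicitly and only entries with in-range indices matter.\<close>

definition bmult :: "nat \<Rightarrow> (nat \<Rightarrow> nat \<Rightarrow> bool) \<Rightarrow> (nat \<Rightarrow> nat \<Rightarrow> bool) \<Rightarrow> (nat \<Rightarrow> nat \<Rightarrow> bool)" where
  "bmult m A B = (\<lambda>i j. \<exists>k<m. A i k \<and> B k j)"

fun bpow :: "nat \<Rightarrow> (nat \<Rightarrow> nat \<Rightarrow> bool) \<Rightarrow> nat \<Rightarrow> (nat \<Rightarrow> nat \<Rightarrow> bool)" where
  "bpow n M 0 = (\<lambda>i j. i = j)"
| "bpow n M (Suc k) = bmult n (bpow n M k) M"

definition primitive :: "nat \<Rightarrow> (nat \<Rightarrow> nat \<Rightarrow> bool) \<Rightarrow> bool" where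
  "primitive n M = (\<exists>k>0. \<forall>i<n. \<forall>j<n. bpow n M k i j)"

definition scrambles :: "nat \<Rightarrow> (nat \<Rightarrow> nat \<Rightarrow> bool) \<Rightarrow> nat \<Rightarrow> bool" where
  "scrambles n M k = (\<forall>i<n. \<forall>j<n. \<exists>l<n. bpow n M k i l \<and> bpow n M k j l)"

definition scrambling_index :: "nat \<Rightarrow> (nat \<Rightarrow> nat \<Rightarrow> bool) \<Rightarrow> nat" where
  "scrambling_index n M = (LEAST k. k > 0 \<and> scrambles n M k)"

definition is_bfact :: "nat \<Rightarrow> nat \<Rightarrow> (nat \<Rightarrow> nat \<Rightarrow> bool) \<Rightarrow> (nat \<Rightarrow> nat \<Rightarrow> bool) \<Rightarrow> (nat \<Rightarrow> nat \<Rightarrow> bool) \<Rightarrow> bool" where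
  "is_bfact n b M A B = (\<forall>i<n. \<forall>j<n. M i j = bmult b A B i j)"

definition boolean_rank :: "nat \<Rightarrow> (nat \<Rightarrow> nat \<Rightarrow> bool) \<Rightarrow> nat" where
  "boolean_rank n M = (LEAST b. \<exists>A B. is_bfact n b M A B)"

definition W2 :: "nat \<Rightarrow> nat \<Rightarrow> bool" where
  "W2 = (\<lambda>i j. \<not> (i = 1 \<and> j = 1))"

definition J2 :: "nat \<Rightarrow> nat \<Rightarrow> bool" where
  "J2 = (\<lambda>i j. True)"

definition mat2_eq :: "(nat \<Rightarrow> nat \<Rightarrow> bool) \<Rightarrow> (nat \<Rightarrow> nat \<Rightarrow> bool) \<Rightarrow> bool" where
  "mat2_eq X Y = (\<forall>i<2. \<forall>j<2. X i j = Y i j)"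

end

theory Submission
  imports Defs
begin

text \<open>Write \<open>M = AB\<close> with \<open>A\<close> of size \<open>n \<times> 2\<close>: row \<open>i\<close> of \<open>M\<close> is the union of the rows of \<open>B\<close>
  selected by row \<open>i\<close> of \<open>A\<close>. Hence two rows of \<open>M\<close> are disjoint, i.e. \<open>k(M) > 1\<close>, exactly when
  they come from rows \<open>e\<^sub>1\<^sup>t\<close> and \<open>e\<^sub>2\<^sup>t\<close> of \<open>A\<close> and no column of \<open>B\<close> is \<open>e\<^sub>1 + e\<^sub>2\<close>.
  Primitivity forbids the walks from an \<open>e\<^sub>1\<^sup>t\<close>-row to stay inside the support of row 1 of \<open>B\<close>,
  which forces \<open>(BA)\<^sub>1\<^sub>2 = 1\<close>, and symmetrically \<open>(BA)\<^sub>2\<^sub>1 = 1\<close>. A common column of the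
  \<open>e\<^sub>1\<^sup>t\<close>- and \<open>e\<^sub>2\<^sup>t\<close>-rows of \<open>M\<^sup>2\<close> yields \<open>(BA)\<^sub>1\<^sub>1 = 1\<close> or \<open>(BA)\<^sub>2\<^sub>2 = 1\<close>; swapping
  the two factors if necessary gives \<open>BA \<in> {W\<^sub>2, J\<^sub>2}\<close>. Conversely, \<open>(BA)\<^sub>1\<^sub>1 = (BA)\<^sub>2\<^sub>1 = 1\<close> makes
  every column in the support of row 1 of \<open>B\<close> a column of ones in \<open>M\<^sup>2\<close>.\<close>

lemma bpow_2: "i < n \<Longrightarrow> bpow n M 2 i j = (\<exists>k<n. M i k \<and> M k j)"
  by (auto simp: bmult_def numeral_2_eq_2)

lemma scrambles_1_iff: "scrambles n M 1 \<longleftrightarrow> (\<forall>i<n. \<forall>j<n. \<exists>l<n. M i l \<and> M j l)"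
  unfolding scrambles_def by (simp add: bmult_def cong: imp_cong)

lemma scrambles_2_iff:
  "scrambles n M 2 \<longleftrightarrow>
    (\<forall>i<n. \<forall>j<n. \<exists>l<n. (\<exists>k<n. M i k \<and> M k l) \<and> (\<exists>k<n. M j k \<and> M k l))"
  unfolding scrambles_def by (simp add: bpow_2 cong: imp_cong)

lemma scrambling_index_eq_2_iff:
  assumes "\<exists>k>0. scrambles n M k"
  shows "scrambling_index n M = 2 \<longleftrightarrow> scrambles n M 2 \<and> \<not> scrambles n M 1"
proof
  assume "scrambling_index n M = 2"
  then show "scrambles n M 2 \<and> \<not> scrambles n M 1"
    using LeastI_ex[OF assms] Least_le[of "\<lambda>k. k > 0 \<and> scrambles n M k" 1]
    by (auto simp: scrambling_index_def)
next
  assume two: "scrambles n M 2 \<and> \<not> scrambles n M 1"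
  show "scrambling_index n M = 2"
    unfolding scrambling_index_def
  proof (rule Least_equality)
    fix k assume "0 < k \<and> scrambles n M k"
    with two show "2 \<le> k" by (cases "k = 1") auto
  qed (use two in simp)
qed

lemma primitive_scrambles: "primitive n M \<Longrightarrow> \<exists>k>0. scrambles n M k"
  by (auto simp: primitive_def scrambles_def)

lemma primitive_forward_closed:
  assumes "primitive n M" and "i < n" and "j < n"
    and start: "\<forall>l<n. M i l \<longrightarrow> l \<in> S"
    and closed: "\<forall>k<n. k \<in> S \<longrightarrow> (\<forall>l<n. M k l \<longrightarrow> l \<in> S)"
  shows "j \<in> S"
proof -
  have walk: "l \<in> S" if "l < n" "bpow n M (Suc m) i l" for m l
    using that
  proof (induction m arbitrary: l)
    case 0
    then show ?case using start \<open>i < n\<close> by (auto simp: bmult_def)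
  next
    case (Suc m)
    then obtain k where "k < n" "bpow n M (Suc m) i k" "M k l"
      by (auto simp: bmult_def)
    then show ?case using Suc.IH Suc.prems closed by blast
  qed
  obtain m where "\<forall>i<n. \<forall>j<n. bpow n M (Suc m) i j"
    using \<open>primitive n M\<close> by (auto simp: primitive_def gr0_conv_Suc)
  then show ?thesis
    using walk \<open>i < n\<close> \<open>j < n\<close> by blast
qed

lemma primitive_row_nonzero:
  assumes "primitive n M" and "i < n"
  shows "\<exists>j<n. M i j"
  using primitive_forward_closed[OF assms assms(2), of "{}"] by auto

lemma boolean_rank_bfact: "\<exists>A B. is_bfact n (boolean_rank n M) M A B"
proof -
  have identity: "is_bfact n n M M (\<lambda>k j. k = j)"
    by (auto simp: is_bfact_def bmult_def)
  show ?thesis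
    unfolding boolean_rank_def by (rule LeastI_ex) (use identity in blast)
qed

lemma boolean_rank_le: "is_bfact n b M A B \<Longrightarrow> boolean_rank n M \<le> b"
  unfolding boolean_rank_def by (rule Least_le) blast

lemma bfact2_entry:
  "is_bfact n 2 M A B \<Longrightarrow> i < n \<Longrightarrow> j < n \<Longrightarrow>
    M i j \<longleftrightarrow> (A i 0 \<and> B 0 j) \<or> (A i 1 \<and> B 1 j)"
  unfolding is_bfact_def bmult_def by (auto simp: less_2_cases_iff)

lemma bfact2_swap:
  "is_bfact n 2 M A B \<Longrightarrow> is_bfact n 2 M (\<lambda>i u. A i (1 - u)) (\<lambda>u j. B (1 - u) j)"
  unfolding is_bfact_def bmult_def by (auto simp: less_2_cases_iff)

lemma bmult_swap:
  "bmult n (\<lambda>u j. B (1 - u) j) (\<lambda>i u. A i (1 - u)) u v = bmult n B A (1 - u) (1 - v)"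
  by (simp add: bmult_def)

lemma mat2_eq_W2_or_J2_iff:
  "mat2_eq X W2 \<or> mat2_eq X J2 \<longleftrightarrow> X 0 0 \<and> X 0 1 \<and> X 1 0"
  by (auto simp: mat2_eq_def W2_def J2_def less_2_cases_iff)

lemma bfact2_rank_2_row_nonempty:
  assumes f: "is_bfact n 2 M A B" and rank: "boolean_rank n M = 2" and "u < 2"
  shows "\<exists>j<n. B u j"
proof (rule ccontr)
  assume "\<not> (\<exists>j<n. B u j)"
  then have "is_bfact n 1 M (\<lambda>i _. A i (1 - u)) (\<lambda>_ j. B (1 - u) j)"
    using bfact2_entry[OF f] \<open>u < 2\<close>
    by (auto simp: is_bfact_def bmult_def less_2_cases_iff)
  then have "boolean_rank n M \<le> 1" by (rule boolean_rank_le)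
  with rank show False by simp
qed

lemma primitive_bfact2_row_nonzero:
  "primitive n M \<Longrightarrow> is_bfact n 2 M A B \<Longrightarrow> i < n \<Longrightarrow> A i 0 \<or> A i 1"
  using primitive_row_nonzero[of n M i] bfact2_entry[of n M A B i] by auto

lemma primitive_bfact2_BA_01:
  assumes p: "primitive n M" and f: "is_bfact n 2 M A B"
    and "i < n" "\<not> A i 1" and "j < n" "\<not> B 0 j"
  shows "bmult n B A 0 1"
proof (rule ccontr)
  assume no_BA_01: "\<not> bmult n B A 0 1"
  have "B 0 l" if "k < n" "B 0 k" "l < n" "M k l" for k l
  proof -
    have "\<not> A k 1" using that(1,2) no_BA_01 by (auto simp: bmult_def)
    then show ?thesis using bfact2_entry[OF f that(1,3)] that(4) by blast
  qed
  then have "\<forall>k<n. k \<in> {l. B 0 l} \<longrightarrow> (\<forall>l<n. M k l \<longrightarrow> l \<in> {l. B 0 l})"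
    by blast
  moreover have "\<forall>l<n. M i l \<longrightarrow> l \<in> {l. B 0 l}"
    using bfact2_entry[OF f \<open>i < n\<close>] \<open>\<not> A i 1\<close> by auto
  ultimately show False
    using primitive_forward_closed[OF p \<open>i < n\<close> \<open>j < n\<close>, of "{l. B 0 l}"] \<open>\<not> B 0 j\<close> by blast
qed

lemma bfact2_unit_rows_if_not_scrambles_1:
  assumes f: "is_bfact n 2 M A B" and rows_A: "\<forall>i<n. A i 0 \<or> A i 1"
    and rows_B: "\<forall>u<2. \<exists>j<n. B u j" and "\<not> scrambles n M 1"
  shows "(\<exists>i<n. A i 0 \<and> \<not> A i 1) \<and> (\<exists>i<n. \<not> A i 0 \<and> A i 1) \<and> \<not> (\<exists>j<n. B 0 j \<and> B 1 j)"
proof -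
  obtain p q where pq: "p < n" "q < n" "\<forall>l<n. \<not> (M p l \<and> M q l)"
    using \<open>\<not> scrambles n M 1\<close> unfolding scrambles_1_iff by blast
  have no_full_column: "\<not> (\<exists>j<n. B 0 j \<and> B 1 j)"
    using pq rows_A bfact2_entry[OF f pq(1)] bfact2_entry[OF f pq(2)] by blast
  have "\<not> (A p u \<and> A q u)" if u: "u < 2" for u
  proof
    assume "A p u \<and> A q u"
    moreover obtain j where "j < n" "B u j" using rows_B u by blast
    ultimately have "M p j \<and> M q j"
      using bfact2_entry[OF f pq(1) \<open>j < n\<close>] bfact2_entry[OF f pq(2) \<open>j < n\<close>] u
      by (auto simp: less_2_cases_iff)
    then show False using pq \<open>j < n\<close> by blast
  qed
  from this[of 0] this[of 1] show ?thesis
    using no_full_column rows_A pq(1,2) by auto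
qed

lemma bfact2_BA_diag_if_scrambles_2:
  assumes f: "is_bfact n 2 M A B" and "scrambles n M 2"
    and i: "i < n" "\<not> A i 1" and i': "i' < n" "\<not> A i' 0"
    and no_full_column: "\<not> (\<exists>j<n. B 0 j \<and> B 1 j)"
  shows "bmult n B A 0 0 \<or> bmult n B A 1 1"
proof -
  obtain l k k' where "l < n" "k < n" "k' < n"
    and walks: "M i k" "M k l" "M i' k'" "M k' l"
    using \<open>scrambles n M 2\<close> i(1) i'(1) unfolding scrambles_2_iff by blast
  have "B 0 k" "B 1 k'"
    using bfact2_entry[OF f i(1) \<open>k < n\<close>] bfact2_entry[OF f i'(1) \<open>k' < n\<close>] walks i i'
    by blast+
  show ?thesis
  proof (cases "B 0 l")
    case True
    then have "A k 0"
      using walks(2) bfact2_entry[OF f \<open>k < n\<close> \<open>l < n\<close>] no_full_column \<open>l < n\<close> by blast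
    then show ?thesis using \<open>B 0 k\<close> \<open>k < n\<close> by (auto simp: bmult_def)
  next
    case False
    then have "A k' 1"
      using walks(4) bfact2_entry[OF f \<open>k' < n\<close> \<open>l < n\<close>] by blast
    then show ?thesis using \<open>B 1 k'\<close> \<open>k' < n\<close> by (auto simp: bmult_def)
  qed
qed

lemma bfact2_not_scrambles_1:
  assumes f: "is_bfact n 2 M A B"
    and i: "i < n" "\<not> A i 1" and i': "i' < n" "\<not> A i' 0"
    and no_full_column: "\<not> (\<exists>j<n. B 0 j \<and> B 1 j)"
  shows "\<not> scrambles n M 1"
proof
  assume "scrambles n M 1"
  then obtain l where "l < n" "M i l" "M i' l"
    using i(1) i'(1) unfolding scrambles_1_iff by blast
  then show False
    using bfact2_entry[OF f i(1) \<open>l < n\<close>] bfact2_entry[OF f i'(1) \<open>l < n\<close>] i i' no_full_column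
    by blast
qed

lemma bfact2_scrambles_2:
  assumes f: "is_bfact n 2 M A B" and rows_A: "\<forall>i<n. A i 0 \<or> A i 1"
    and "bmult n B A 0 0" "bmult n B A 1 0"
  shows "scrambles n M 2"
proof -
  obtain l where "l < n" "B 0 l"
    using \<open>bmult n B A 0 0\<close> by (auto simp: bmult_def)
  have "\<exists>k<n. M i k \<and> M k l" if "i < n" for i
  proof -
    obtain u k where "A i u" "u < 2" "k < n" "B u k" "A k 0"
      using rows_A \<open>i < n\<close> assms(3,4) by (auto simp: bmult_def)
    moreover have "M i k"
      using bfact2_entry[OF f \<open>i < n\<close> \<open>k < n\<close>] \<open>A i u\<close> \<open>B u k\<close> \<open>u < 2\<close>
      by (auto simp: less_2_cases_iff)
    moreover have "M k l"
      using bfact2_entry[OF f \<open>k < n\<close> \<open>l < n\<close>] \<open>A k 0\<close> \<open>B 0 l\<close> by blast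
    ultimately show ?thesis by blast
  qed
  then show ?thesis
    using \<open>l < n\<close> unfolding scrambles_2_iff by blast
qed

lemma rank_2_scrambling_bfact2:
  assumes p: "primitive n M" and rank: "boolean_rank n M = 2"
    and "scrambles n M 2" "\<not> scrambles n M 1"
  shows "\<exists>A B. is_bfact n 2 M A B
    \<and> bmult n B A 0 0 \<and> bmult n B A 0 1 \<and> bmult n B A 1 0
    \<and> (\<exists>i<n. A i 0 \<and> \<not> A i 1) \<and> (\<exists>i<n. \<not> A i 0 \<and> A i 1) \<and> \<not> (\<exists>j<n. B 0 j \<and> B 1 j)"
proof -
  have conditions: "(\<exists>i<n. A i 0 \<and> \<not> A i 1) \<and> (\<exists>i<n. \<not> A i 0 \<and> A i 1)
      \<and> \<not> (\<exists>j<n. B 0 j \<and> B 1 j) \<and> bmult n B A 0 1 \<and> bmult n B A 1 0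
      \<and> (bmult n B A 0 0 \<or> bmult n B A 1 1)"
    if f: "is_bfact n 2 M A B" for A B
  proof -
    have rows_A: "\<forall>i<n. A i 0 \<or> A i 1"
      using primitive_bfact2_row_nonzero[OF p f] by blast
    have rows_B: "\<forall>u<2. \<exists>j<n. B u j"
      using bfact2_rank_2_row_nonempty[OF f rank] by blast
    obtain i i' where i: "i < n" "A i 0" "\<not> A i 1" and i': "i' < n" "\<not> A i' 0" "A i' 1"
      and no_full_column: "\<not> (\<exists>j<n. B 0 j \<and> B 1 j)"
      using bfact2_unit_rows_if_not_scrambles_1[OF f rows_A rows_B \<open>\<not> scrambles n M 1\<close>] by blast
    obtain j j' where j: "j < n" "B 1 j" and j': "j' < n" "B 0 j'"
      using rows_B[rule_format, of 0] rows_B[rule_format, of 1] by auto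
    have "bmult n B A 0 1"
      using primitive_bfact2_BA_01[OF p f i(1,3) j(1)] no_full_column j by blast
    moreover have "bmult n (\<lambda>u j. B (1 - u) j) (\<lambda>i u. A i (1 - u)) 0 1"
      using primitive_bfact2_BA_01[OF p bfact2_swap[OF f] i'(1) _ j'(1)] i' j' no_full_column
      by auto
    then have "bmult n B A 1 0" using bmult_swap[of n B A 0 1] by simp
    moreover have "bmult n B A 0 0 \<or> bmult n B A 1 1"
      by (rule bfact2_BA_diag_if_scrambles_2[OF f \<open>scrambles n M 2\<close> i(1,3) i'(1,2) no_full_column])
    ultimately show ?thesis
      using i i' no_full_column by blast
  qed
  obtain A B where f: "is_bfact n 2 M A B"
    using boolean_rank_bfact rank by metis
  show ?thesis
  proof (cases "bmult n B A 0 0")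
    case True
    with conditions[OF f] f show ?thesis by blast
  next
    case False
    let ?A = "\<lambda>i u. A i (1 - u)" and ?B = "\<lambda>u j. B (1 - u) j"
    have f': "is_bfact n 2 M ?A ?B" by (rule bfact2_swap[OF f])
    have "bmult n ?B ?A 0 0"
      using False conditions[OF f] bmult_swap[of n B A 0 0] by simp
    with conditions[OF f'] f' show ?thesis by blast
  qed
qed

lemma scrambling_bfact2_index_2:
  assumes "primitive n M"
    and "\<exists>A B. is_bfact n 2 M A B
      \<and> bmult n B A 0 0 \<and> bmult n B A 0 1 \<and> bmult n B A 1 0
      \<and> (\<exists>i<n. A i 0 \<and> \<not> A i 1) \<and> (\<exists>i<n. \<not> A i 0 \<and> A i 1) \<and> \<not> (\<exists>j<n. B 0 j \<and> B 1 j)"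
  shows "scrambles n M 2 \<and> \<not> scrambles n M 1"
proof -
  obtain A B i i' where f: "is_bfact n 2 M A B" and BA: "bmult n B A 0 0" "bmult n B A 1 0"
    and i: "i < n" "\<not> A i 1" and i': "i' < n" "\<not> A i' 0"
    and no_full_column: "\<not> (\<exists>j<n. B 0 j \<and> B 1 j)"
    using assms(2) by blast
  have "\<forall>i<n. A i 0 \<or> A i 1"
    using primitive_bfact2_row_nonzero[OF assms(1) f] by blast
  then show ?thesis
    using bfact2_scrambles_2[OF f _ BA] bfact2_not_scrambles_1[OF f i i' no_full_column] by blast
qed

theorem theorem2p8:
  fixes n :: nat and M :: "nat \<Rightarrow> nat \<Rightarrow> bool"
  assumes "primitive n M" and "boolean_rank n M = 2"
  shows "scrambling_index n M = 2 \<longleftrightarrow>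
    (\<exists>A B. is_bfact n 2 M A B
       \<and> (mat2_eq (bmult n B A) W2 \<or> mat2_eq (bmult n B A) J2)
       \<and> (\<exists>i<n. A i 0 \<and> \<not> A i 1) \<and> (\<exists>i<n. \<not> A i 0 \<and> A i 1)
       \<and> \<not> (\<exists>j<n. B 0 j \<and> B 1 j))"
  unfolding scrambling_index_eq_2_iff[OF primitive_scrambles[OF assms(1)]] mat2_eq_W2_or_J2_iff
  using rank_2_scrambling_bfact2[OF assms] scrambling_bfact2_index_2[OF assms(1)] by blast

end
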